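(* For all $x,y\in\mathbb{B}^2$ with $x\neq y$, the lower bound for $\tilde\tau_{\mathbb{B}^2}(x,y)$ in the following piecewise form, $$L(x,y)=\begin{cases}\log\Big(1+2\sqrt{\frac{|x-y|\sqrt{|x+y|^2+|x-y|^2}}{4-|x+y|^2-|x-y|^2}}\Big), & \text{if } |x+y|\Big(1+\frac{4}{|x+y|^2+|x-y|^2}\Big)\le4,\\[2mm] \log\Big(1+\frac{2|x-y|}{\sqrt{(2-|x+y|)^2+|x-y|^2}}\Big), & \text{otherwise},\end{cases}$$ satisfies $$L(x,y)\ge\log\Big(1+\frac{2|x-y|}{\sqrt{4-|x-y|^2}}\Big).$$
   Context: $\mathbb{B}^2$ is the open unit disk in $\mathbb{R}^2$; $|\cdot|$ is the Euclidean norm. *)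

theory Defs
  imports "HOL-Analysis.Analysis"
begin

definition tau_lower :: "real^2 \<Rightarrow> real^2 \<Rightarrow> real" where
  "tau_lower x y =
    (let s = norm (x + y); d = norm (x - y) in
     if s * (1 + 4 / (s\<^sup>2 + d\<^sup>2)) \<le> 4
     then ln (1 + 2 * sqrt (d * sqrt (s\<^sup>2 + d\<^sup>2) / (4 - s\<^sup>2 - d\<^sup>2)))
     else ln (1 + 2 * d / sqrt ((2 - s)\<^sup>2 + d\<^sup>2)))"

end

theory Submission
  imports Defs
begin

text \<open>Write \<open>s = |x + y|\<close> and \<open>d = |x - y|\<close>. By the parallelogram law
  \<open>s\<^sup>2 + d\<^sup>2 = 2(|x|\<^sup>2 + |y|\<^sup>2) < 4\<close>, and both branches reduce to inequalities between
  \<open>s\<close> and \<open>d\<close> alone. In the first branch, after squaring, the claim becomes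
  \<open>d (4 - s\<^sup>2 - d\<^sup>2) \<le> sqrt (s\<^sup>2 + d\<^sup>2) (4 - d\<^sup>2)\<close>, which holds factor by factor.
  In the second branch the negated branch condition \<open>4 (s\<^sup>2 + d\<^sup>2) < s (s\<^sup>2 + d\<^sup>2 + 4)\<close>
  together with \<open>s < 2\<close> gives \<open>s\<^sup>2 + d\<^sup>2 < 2 s\<close>, hence \<open>(2 - s)\<^sup>2 + d\<^sup>2 \<le> 4 - d\<^sup>2\<close>.\<close>

lemma norm_add_sq_plus_norm_diff_sq:
  fixes x y :: "'a::real_inner"
  shows "(norm (x + y))\<^sup>2 + (norm (x - y))\<^sup>2 = 2 * ((norm x)\<^sup>2 + (norm y)\<^sup>2)"
  by (simp add: power2_norm_eq_inner inner_add_left inner_add_right inner_diff_left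
      inner_diff_right inner_commute)

lemma norm_add_sq_plus_norm_diff_sq_less_4:
  fixes x y :: "'a::real_inner"
  assumes "x \<in> ball 0 1" and "y \<in> ball 0 1"
  shows "(norm (x + y))\<^sup>2 + (norm (x - y))\<^sup>2 < 4"
proof -
  have "(norm x)\<^sup>2 < 1" and "(norm y)\<^sup>2 < 1"
    using assms by (simp_all add: abs_square_less_1)
  then show ?thesis
    unfolding norm_add_sq_plus_norm_diff_sq by simp
qed

lemma first_branch_ge:
  fixes s d :: real
  assumes "0 \<le> d" and "s\<^sup>2 + d\<^sup>2 < 4"
  shows "2 * d / sqrt (4 - d\<^sup>2) \<le> 2 * sqrt (d * sqrt (s\<^sup>2 + d\<^sup>2) / (4 - s\<^sup>2 - d\<^sup>2))"
proof -
  define t where "t = s\<^sup>2 + d\<^sup>2"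
  have t4: "t < 4"
    using assms(2) by (simp add: t_def)
  have d2: "d\<^sup>2 < 4"
    using t4 zero_le_power2[of s] unfolding t_def by linarith
  have d2_le: "d\<^sup>2 \<le> t"
    by (simp add: t_def)
  then have "d \<le> sqrt t"
    by (simp add: real_le_rsqrt)
  then have "d * (4 - t) \<le> sqrt t * (4 - d\<^sup>2)"
    using assms(1) d2_le t4 by (intro mult_mono) (auto simp: t_def)
  then have "d * (d * (4 - t)) \<le> d * (sqrt t * (4 - d\<^sup>2))"
    using assms(1) by (rule mult_left_mono)
  then have "d\<^sup>2 / (4 - d\<^sup>2) \<le> d * sqrt t / (4 - t)"
    using d2 t4 by (simp add: divide_simps power2_eq_square algebra_simps)
  moreover have "d / sqrt (4 - d\<^sup>2) = sqrt (d\<^sup>2 / (4 - d\<^sup>2))"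
    using assms(1) by (simp add: real_sqrt_divide)
  ultimately have "d / sqrt (4 - d\<^sup>2) \<le> sqrt (d * sqrt t / (4 - t))"
    using real_sqrt_le_mono by presburger
  then show ?thesis
    by (simp add: t_def diff_diff_eq)
qed

lemma second_branch_ge:
  fixes s d :: real
  assumes "0 \<le> d" and "s\<^sup>2 + d\<^sup>2 < 4" and "\<not> s * (1 + 4 / (s\<^sup>2 + d\<^sup>2)) \<le> 4"
  shows "2 * d / sqrt (4 - d\<^sup>2) \<le> 2 * d / sqrt ((2 - s)\<^sup>2 + d\<^sup>2)"
proof -
  define t where "t = s\<^sup>2 + d\<^sup>2"
  have "s \<noteq> 0"
    using assms(3) by auto
  then have t_pos: "t > 0"
    using zero_le_power2[of d] by (simp add: t_def add_pos_nonneg)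
  have "s\<^sup>2 < 4"
    using assms(2) zero_le_power2[of d] by linarith
  then have "s\<^sup>2 < 2\<^sup>2"
    by simp
  then have s2: "s < 2"
    by (rule power_less_imp_less_base) simp
  have "4 * t < s * (t + 4)"
    using assms(3) t_pos unfolding t_def[symmetric] by (simp add: field_simps)
  moreover have "s * t < 2 * t"
    using s2 t_pos by simp
  ultimately have "t < 2 * s"
    by (simp add: algebra_simps)
  then have "s\<^sup>2 + 2 * d\<^sup>2 \<le> 4 * s"
    using zero_le_power2[of s] unfolding t_def by linarith
  then have "(2 - s)\<^sup>2 + d\<^sup>2 \<le> 4 - d\<^sup>2"
    by (simp add: power2_diff algebra_simps)
  moreover have "(2 - s)\<^sup>2 + d\<^sup>2 > 0"
    using s2 by (simp add: add_pos_nonneg)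
  ultimately show ?thesis
    using assms(1) by (intro divide_left_mono) auto
qed

theorem mainTheorem7:
  fixes x y :: "real^2"
  assumes "x \<in> ball 0 1" and "y \<in> ball 0 1" and "x \<noteq> y"
  shows "tau_lower x y \<ge> ln (1 + 2 * norm (x - y) / sqrt (4 - (norm (x - y))\<^sup>2))"
proof -
  define s where "s = norm (x + y)"
  define d where "d = norm (x - y)"
  have d_nonneg: "0 \<le> d" and sum_less: "s\<^sup>2 + d\<^sup>2 < 4"
    using norm_add_sq_plus_norm_diff_sq_less_4[OF assms(1,2)] by (simp_all add: s_def d_def)
  have "d\<^sup>2 < 4"
    using sum_less zero_le_power2[of s] by linarith
  then have "0 < 1 + 2 * d / sqrt (4 - d\<^sup>2)"
    using d_nonneg by (intro add_pos_nonneg) auto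
  moreover have "2 * d / sqrt (4 - d\<^sup>2) \<le> 2 * sqrt (d * sqrt (s\<^sup>2 + d\<^sup>2) / (4 - s\<^sup>2 - d\<^sup>2))"
    using first_branch_ge[OF d_nonneg sum_less] .
  moreover have "2 * d / sqrt (4 - d\<^sup>2) \<le> 2 * d / sqrt ((2 - s)\<^sup>2 + d\<^sup>2)"
    if "\<not> s * (1 + 4 / (s\<^sup>2 + d\<^sup>2)) \<le> 4"
    using second_branch_ge[OF d_nonneg sum_less that] .
  ultimately show ?thesis
    unfolding tau_lower_def Let_def s_def[symmetric] d_def[symmetric] by auto
qed

end
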